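(* If $\rho$ is an invariant state supported on $\Omega^\perp=\mathrm{span}\{|-\rangle,|+\rangle,\varphi_{0_1},\varphi_{0_N}\}$, then $\rho=P_-=|-\rangle\langle -|$.
   Context: Fix integers $N\ge 2$ and $n_1\ge n_2\ge\dots\ge n_N\ge 1$. Let $\mathcal H$ be a finite-dimensional complex Hilbert space with orthonormal basis $\{|-\rangle,|+\rangle\}\cup\{|a_k\rangle:1\le k\le N,\ 0\le a\le n_k-1\}$. For vectors $x,y$, $|x\rangle\langle y|$ denotes the operator $u\mapsto\langle y,u\rangle x$. Put $E_k=\mathrm{span}\{|a_k\rangle:0\le a\le n_k-1\}$, $P_k$ the orthogonal projection onto $E_k$, $P_\pm=|\pm\rangle\langle\pm|$, $\zeta_k=e^{2\pi i/n_k}$, and $\varphi_{a_k}=n_k^{-1/2}\sum_{b=0}^{n_k-1}\zeta_k^{-ba}|b_k\rangle$ for $0\le a\le n_k-1$. For $1\le k\le N-1$ let $Z_k=n_k^{-1/2}\sum_{b=0}^{n_{k+1}-1}\sum_{a=0}^{n_k-1}\zeta_k^{ba}|b_{k+1}\rangle\langle a_k|$ (an operator on $\mathcal H$), $|Z|_k=Z_k^*Z_k$. Let $\omega$ range over the set $\{\omega_+,\omega_-,\omega_1,\dots,\omega_{N-1}\}$ of (distinct) Bohr frequencies, and let $\Gamma_{\pm,\omega}>0$, $\gamma_{\pm,\omega}\in\mathbb R$ be constants. Kraus operators: $L_{-,\omega_+}=\sqrt{n_1\Gamma_{-,\omega_+}}|\varphi_{0_1}\rangle\langle +|$, $L_{+,\omega_+}=\sqrt{n_1\Gamma_{+,\omega_+}}|+\rangle\langle\varphi_{0_1}|$,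 $L_{-,\omega_k}=\sqrt{\Gamma_{-,\omega_k}}Z_k$, $L_{+,\omega_k}=\sqrt{\Gamma_{+,\omega_k}}Z_k^*$ ($1\le k\le N-1$), $L_{-,\omega_-}=\sqrt{\Gamma_{-,\omega_-}}|-\rangle\langle\varphi_{0_N}|$, $L_{+,\omega_-}=0$. Effective Hamiltonian $H_{\mathrm{eff}}=n_1\gamma_{-,\omega_+}P_+-n_1\gamma_{+,\omega_+}|\varphi_{0_1}\rangle\langle\varphi_{0_1}|+\gamma_{-,\omega_-}|\varphi_{0_N}\rangle\langle\varphi_{0_N}|-\gamma_{+,\omega_-}P_-+\sum_{k=1}^{N-1}(\gamma_{-,\omega_k}|Z|_k-\gamma_{+,\omega_k}P_{k+1})$. The generator is $\mathcal L(\rho)=-i[H_{\mathrm{eff}},\rho]+\sum_{\omega}\sum_{\epsilon=\pm}\big(L_{\epsilon,\omega}\rho L_{\epsilon,\omega}^*-\tfrac12\{L_{\epsilon,\omega}^*L_{\epsilon,\omega},\rho\}\big)$. A state is a positive operator of trace one; it is invariant if $\mathcal L(\rho)=0$; an operator is supported on a subspace $E$ if its range is contained in $E$. *)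

theory Defs
  imports Complex_Main
begin

text \<open>Orthonormal basis of the Hilbert space: Mn = |->, Pl = |+>, Bas k a = |a_k>.
  Vectors and operators are represented by their coordinates / matrix entries
  with respect to this basis; only indices in Idx N n are meaningful.\<close>

datatype idx = Mn | Pl | Bas nat nat
datatype sgn = Pos | Neg
datatype bohr = WP | WM | W nat  (* omega_+, omega_-, omega_k *)

type_synonym vec = "idx \<Rightarrow> complex"
type_synonym op = "idx \<Rightarrow> idx \<Rightarrow> complex"

definition Idx :: "nat \<Rightarrow> (nat \<Rightarrow> nat) \<Rightarrow> idx set" where
  "Idx N n = {Mn, Pl} \<union> {Bas k a | k a. 1 \<le> k \<and> k \<le> N \<and> a < n k}"

definition Freqs :: "nat \<Rightarrow> bohr set" where
  "Freqs N = {WP, WM} \<union> W ` {1..N-1}"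

definition ket :: "idx \<Rightarrow> vec" where
  "ket i = (\<lambda>j. if j = i then 1 else 0)"

text \<open>|x><y| u = <y,u> x, inner product conjugate-linear in the first slot.\<close>
definition outer :: "vec \<Rightarrow> vec \<Rightarrow> op" where
  "outer x y = (\<lambda>i j. x i * cnj (y j))"

definition opmult :: "idx set \<Rightarrow> op \<Rightarrow> op \<Rightarrow> op" where
  "opmult I A B = (\<lambda>i j. \<Sum>l\<in>I. A i l * B l j)"

definition adj :: "op \<Rightarrow> op" where
  "adj A = (\<lambda>i j. cnj (A j i))"

definition opapply :: "idx set \<Rightarrow> op \<Rightarrow> vec \<Rightarrow> vec" where
  "opapply I A u = (\<lambda>i. \<Sum>j\<in>I. A i j * u j)"

definition zeta :: "(nat \<Rightarrow> nat) \<Rightarrow> nat \<Rightarrow> complex" where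
  "zeta n k = cis (2 * pi / real (n k))"

definition phi :: "(nat \<Rightarrow> nat) \<Rightarrow> nat \<Rightarrow> nat \<Rightarrow> vec" where
  "phi n k a = (\<lambda>i. case i of
      Bas k' b \<Rightarrow> (if k' = k \<and> b < n k
                   then inverse (zeta n k ^ (b * a)) / complex_of_real (sqrt (real (n k)))
                   else 0)
    | _ \<Rightarrow> 0)"

definition Zop :: "(nat \<Rightarrow> nat) \<Rightarrow> nat \<Rightarrow> op" where
  "Zop n k = (\<lambda>i j. case (i, j) of
      (Bas k1 b, Bas k2 a) \<Rightarrow>
         (if k1 = Suc k \<and> k2 = k \<and> b < n (Suc k) \<and> a < n k
          then zeta n k ^ (b * a) / complex_of_real (sqrt (real (n k)))
          else 0)
    | _ \<Rightarrow> 0)"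

definition absZ :: "nat \<Rightarrow> (nat \<Rightarrow> nat) \<Rightarrow> nat \<Rightarrow> op" where
  "absZ N n k = opmult (Idx N n) (adj (Zop n k)) (Zop n k)"

definition Pk :: "(nat \<Rightarrow> nat) \<Rightarrow> nat \<Rightarrow> op" where
  "Pk n k = (\<lambda>i j. if i = j \<and> (\<exists>a. i = Bas k a \<and> a < n k) then 1 else 0)"

definition smult_op :: "complex \<Rightarrow> op \<Rightarrow> op" where
  "smult_op c A = (\<lambda>i j. c * A i j)"

definition sq :: "real \<Rightarrow> complex" where
  "sq x = complex_of_real (sqrt x)"

definition Kraus :: "nat \<Rightarrow> (nat \<Rightarrow> nat) \<Rightarrow> (sgn \<Rightarrow> bohr \<Rightarrow> real) \<Rightarrow> sgn \<Rightarrow> bohr \<Rightarrow> op" where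
  "Kraus N n Gam e w = (case (e, w) of
      (Neg, WP) \<Rightarrow> smult_op (sq (real (n 1) * Gam Neg WP)) (outer (phi n 1 0) (ket Pl))
    | (Pos, WP) \<Rightarrow> smult_op (sq (real (n 1) * Gam Pos WP)) (outer (ket Pl) (phi n 1 0))
    | (Neg, W k) \<Rightarrow> smult_op (sq (Gam Neg (W k))) (Zop n k)
    | (Pos, W k) \<Rightarrow> smult_op (sq (Gam Pos (W k))) (adj (Zop n k))
    | (Neg, WM) \<Rightarrow> smult_op (sq (Gam Neg WM)) (outer (ket Mn) (phi n N 0))
    | (Pos, WM) \<Rightarrow> (\<lambda>i j. 0))"

definition Heff :: "nat \<Rightarrow> (nat \<Rightarrow> nat) \<Rightarrow> (sgn \<Rightarrow> bohr \<Rightarrow> real) \<Rightarrow> op" where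
  "Heff N n gam = (\<lambda>i j.
       complex_of_real (real (n 1) * gam Neg WP) * outer (ket Pl) (ket Pl) i j
     - complex_of_real (real (n 1) * gam Pos WP) * outer (phi n 1 0) (phi n 1 0) i j
     + complex_of_real (gam Neg WM) * outer (phi n N 0) (phi n N 0) i j
     - complex_of_real (gam Pos WM) * outer (ket Mn) (ket Mn) i j
     + (\<Sum>k\<in>{1..N-1}. complex_of_real (gam Neg (W k)) * absZ N n k i j
                       - complex_of_real (gam Pos (W k)) * Pk n (Suc k) i j))"

definition Lgen :: "nat \<Rightarrow> (nat \<Rightarrow> nat) \<Rightarrow> (sgn \<Rightarrow> bohr \<Rightarrow> real) \<Rightarrow> (sgn \<Rightarrow> bohr \<Rightarrow> real) \<Rightarrow> op \<Rightarrow> op" where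
  "Lgen N n Gam gam \<rho> = (let I = Idx N n; H = Heff N n gam in
     (\<lambda>i j. - \<i> * (opmult I H \<rho> i j - opmult I \<rho> H i j)
       + (\<Sum>w\<in>Freqs N. \<Sum>e\<in>{Pos, Neg}.
            let L = Kraus N n Gam e w; LL = opmult I (adj L) L in
              opmult I (opmult I L \<rho>) (adj L) i j
              - (1/2) * (opmult I LL \<rho> i j + opmult I \<rho> LL i j))))"

definition is_state :: "nat \<Rightarrow> (nat \<Rightarrow> nat) \<Rightarrow> op \<Rightarrow> bool" where
  "is_state N n \<rho> \<longleftrightarrow>
     (\<forall>i j. i \<notin> Idx N n \<or> j \<notin> Idx N n \<longrightarrow> \<rho> i j = 0)
   \<and> (\<forall>v. let q = (\<Sum>i\<in>Idx N n. \<Sum>j\<in>Idx N n. cnj (v i) * \<rho> i j * v j)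
          in Im q = 0 \<and> Re q \<ge> 0)
   \<and> (\<Sum>i\<in>Idx N n. \<rho> i i) = 1"

definition invariant :: "nat \<Rightarrow> (nat \<Rightarrow> nat) \<Rightarrow> (sgn \<Rightarrow> bohr \<Rightarrow> real) \<Rightarrow> (sgn \<Rightarrow> bohr \<Rightarrow> real) \<Rightarrow> op \<Rightarrow> bool" where
  "invariant N n Gam gam \<rho> \<longleftrightarrow>
     (\<forall>i\<in>Idx N n. \<forall>j\<in>Idx N n. Lgen N n Gam gam \<rho> i j = 0)"

definition OmegaPerp :: "nat \<Rightarrow> (nat \<Rightarrow> nat) \<Rightarrow> vec set" where
  "OmegaPerp N n = {v. \<exists>a b c d. \<forall>i\<in>Idx N n.
      v i = a * ket Mn i + b * ket Pl i + c * phi n 1 0 i + d * phi n N 0 i}"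

definition supported_on :: "nat \<Rightarrow> (nat \<Rightarrow> nat) \<Rightarrow> op \<Rightarrow> vec set \<Rightarrow> bool" where
  "supported_on N n A E \<longleftrightarrow> (\<forall>u. opapply (Idx N n) A u \<in> E)"

end

theory Submission
  imports Defs
begin

(* The diagonal entries of L(rho) = 0 are used to empty the state block by block. Every
   Kraus operator annihilates |->, H_eff is diagonal there, and only the jump phi_{0_N} -> |->
   reaches |->, so <-|L(rho)|-> = Gamma_{-,omega_-} <phi_{0_N}|rho|phi_{0_N}>, and positivity
   gives rho phi_{0_N} = 0. Since every column of rho lies in Omega-perp, on E_1 and E_N it is a
   multiple of phi_{0_1} resp. phi_{0_N} and on the other blocks it vanishes; hence rho now lives
   on E_1 + span{|->, |+>}. The empty level |0_2> is then fed only by Z_1 out of phi_{0_1}, which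
   kills E_1 in the same way, and the empty level |0_1> is fed only by L_{-,omega_+} out of |+>,
   which forces rho_{++} = 0. Positivity and trace one leave rho = P_-. *)

definition sesq_form ::
    "'a set \<Rightarrow> ('a \<Rightarrow> 'a \<Rightarrow> complex) \<Rightarrow> ('a \<Rightarrow> complex) \<Rightarrow> ('a \<Rightarrow> complex) \<Rightarrow> complex" where
  "sesq_form I r x y = (\<Sum>i\<in>I. \<Sum>j\<in>I. cnj (x i) * r i j * y j)"

definition psd_on :: "'a set \<Rightarrow> ('a \<Rightarrow> 'a \<Rightarrow> complex) \<Rightarrow> bool" where
  "psd_on I r \<longleftrightarrow> (\<forall>v. Im (sesq_form I r v v) = 0 \<and> 0 \<le> Re (sesq_form I r v v))"

lemma sesq_form_two_point:
  fixes a b :: complex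
  assumes "finite I" "i \<in> I" "j \<in> I"
  defines "v \<equiv> \<lambda>x. (if x = i then a else 0) + (if x = j then b else 0)"
  shows "sesq_form I r v v = cnj a * r i i * a + cnj a * r i j * b + cnj b * r j i * a + cnj b * r j j * b"
proof -
  have row: "(\<Sum>y\<in>I. r x y * v y) = r x i * a + r x j * b" for x
  proof -
    have "(\<Sum>y\<in>I. r x y * v y)
        = (\<Sum>y\<in>I. (if y = i then r x i * a else 0) + (if y = j then r x j * b else 0))"
      by (rule sum.cong) (auto simp: v_def distrib_left)
    then show ?thesis using assms by (simp add: sum.distrib)
  qed
  have "sesq_form I r v v = (\<Sum>x\<in>I. cnj (v x) * (r x i * a + r x j * b))"
    unfolding sesq_form_def row[symmetric] by (simp add: sum_distrib_left mult.assoc)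
  also have "\<dots> = (\<Sum>x\<in>I. (if x = i then cnj a * (r i i * a + r i j * b) else 0)
                         + (if x = j then cnj b * (r j i * a + r j j * b) else 0))"
    by (rule sum.cong) (auto simp: v_def distrib_right)
  also have "\<dots> = cnj a * (r i i * a + r i j * b) + cnj b * (r j i * a + r j j * b)"
    using assms by (simp add: sum.distrib)
  finally show ?thesis by (simp add: algebra_simps)
qed

lemma sesq_form_point:
  assumes "finite I" "i \<in> I"
  shows "sesq_form I r (\<lambda>x. if x = i then a else 0) (\<lambda>x. if x = i then a else 0) = cnj a * r i i * a"
  using sesq_form_two_point[OF assms assms(2), of r a 0] by simp

lemma sesq_form_scale:
  "sesq_form I r (\<lambda>i. c * v i) (\<lambda>i. c * v i) = cnj c * c * sesq_form I r v v"
  by (simp add: sesq_form_def sum_distrib_left mult_ac)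

lemma sesq_form_diff_scale:
  "sesq_form I r (\<lambda>i. f i - c * g i) (\<lambda>i. f i - c * g i)
     = sesq_form I r f f - cnj c * sesq_form I r g f - c * sesq_form I r f g
       + cnj c * c * sesq_form I r g g"
  by (simp add: sesq_form_def algebra_simps sum.distrib sum_subtractf sum_distrib_left)

lemma psd_on_hermitian:
  assumes "finite I" "psd_on I r" "i \<in> I" "j \<in> I"
  shows "r j i = cnj (r i j)"
proof -
  have real: "Im (sesq_form I r v v) = 0" for v
    using assms(2) unfolding psd_on_def by blast
  have "Im (r i i) = 0"
    using real[of "\<lambda>x. if x = i then 1 else 0"] by (simp add: sesq_form_point[OF assms(1,3)])
  moreover have "Im (r j j) = 0"
    using real[of "\<lambda>x. if x = j then 1 else 0"] by (simp add: sesq_form_point[OF assms(1,4)])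
  moreover have "Im (r i i + r i j + r j i + r j j) = 0"
    using real[of "\<lambda>x. (if x = i then 1 else 0) + (if x = j then 1 else 0)"]
    unfolding sesq_form_two_point[OF assms(1,3,4)] by simp
  moreover have "Im (r i i + \<i> * r i j - \<i> * r j i + r j j) = 0"
    using real[of "\<lambda>x. (if x = i then 1 else 0) + (if x = j then \<i> else 0)"]
    unfolding sesq_form_two_point[OF assms(1,3,4)] by (simp add: algebra_simps)
  ultimately show ?thesis by (simp add: complex_eq_iff)
qed

lemma nonpos_if_dominated_by_quadratic:
  fixes G Q :: real
  assumes "\<And>s. 0 < s \<Longrightarrow> 2 * s * G \<le> s\<^sup>2 * Q"
  shows "G \<le> 0"
proof (rule ccontr)
  assume "\<not> G \<le> 0"
  define s where "s = G / (\<bar>Q\<bar> + 1)"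
  have "0 < s" using \<open>\<not> G \<le> 0\<close> by (simp add: s_def)
  then have "2 * G \<le> s * Q" using assms[of s] by (simp add: power2_eq_square mult.assoc)
  also have "\<dots> \<le> s * \<bar>Q\<bar>" using \<open>0 < s\<close> by (simp add: mult_left_mono)
  also have "\<dots> < G" using \<open>\<not> G \<le> 0\<close> by (simp add: s_def field_simps)
  finally show False using \<open>\<not> G \<le> 0\<close> by simp
qed

lemma sesq_form_cnj_swap:
  assumes "\<And>i j. i \<in> I \<Longrightarrow> j \<in> I \<Longrightarrow> r j i = cnj (r i j)"
  shows "sesq_form I r y x = cnj (sesq_form I r x y)"
proof -
  have "cnj (sesq_form I r x y) = (\<Sum>i\<in>I. \<Sum>j\<in>I. x i * cnj (r i j) * cnj (y j))"
    by (simp add: sesq_form_def)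
  also have "\<dots> = (\<Sum>i\<in>I. \<Sum>j\<in>I. x i * r j i * cnj (y j))"
    by (intro sum.cong refl) (metis assms)
  also have "\<dots> = sesq_form I r y x"
    unfolding sesq_form_def by (subst sum.swap) (simp add: mult_ac)
  finally show ?thesis by simp
qed

lemma psd_on_null_vector:
  assumes fin: "finite I" and psd: "psd_on I r" and null: "sesq_form I r f f = 0" and "i \<in> I"
  shows "(\<Sum>j\<in>I. r i j * f j) = 0"
proof -
  define g where "g i = (\<Sum>j\<in>I. r i j * f j)" for i
  define G where "G = (\<Sum>i\<in>I. (cmod (g i))\<^sup>2)"
  define Q where "Q = Re (sesq_form I r g g)"
  have gf: "sesq_form I r g f = G"
  proof -
    have "sesq_form I r g f = (\<Sum>i\<in>I. cnj (g i) * g i)"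
      unfolding sesq_form_def g_def by (simp add: sum_distrib_left mult.assoc)
    also have "\<dots> = G"
      unfolding G_def of_real_sum complex_norm_square by (simp add: mult.commute)
    finally show ?thesis .
  qed
  have "sesq_form I r f g = cnj (sesq_form I r g f)"
    by (rule sesq_form_cnj_swap) (rule psd_on_hermitian[OF fin psd])
  then have fg: "sesq_form I r f g = G"
    using gf by simp
  have gg: "sesq_form I r g g = Q"
    using psd unfolding psd_on_def Q_def by (simp add: complex_eq_iff)
  have "2 * s * G \<le> s\<^sup>2 * Q" if "0 < s" for s
  proof -
    have "0 \<le> Re (sesq_form I r (\<lambda>i. f i - of_real s * g i) (\<lambda>i. f i - of_real s * g i))"
      using psd unfolding psd_on_def by blast
    also have "\<dots> = s\<^sup>2 * Q - 2 * s * G"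
      by (simp add: sesq_form_diff_scale null gf fg gg power2_eq_square)
    finally show ?thesis by simp
  qed
  then have "G \<le> 0" by (rule nonpos_if_dominated_by_quadratic)
  moreover have "0 \<le> G" unfolding G_def by (simp add: sum_nonneg)
  ultimately have "(\<Sum>i\<in>I. (cmod (g i))\<^sup>2) = 0" unfolding G_def by simp
  then have "g i = 0" using fin \<open>i \<in> I\<close> by (simp add: sum_nonneg_eq_0_iff)
  then show ?thesis unfolding g_def .
qed

lemma sesq_form_cong_support:
  assumes "\<And>i j. r i j \<noteq> 0 \<Longrightarrow> i \<in> S \<and> j \<in> S" and "\<And>i. i \<in> S \<Longrightarrow> v i = w i"
  shows "sesq_form I r v v = sesq_form I r w w"
  unfolding sesq_form_def
proof (intro sum.cong refl)
  fix i j
  show "cnj (v i) * r i j * v j = cnj (w i) * r i j * w j"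
    using assms by (cases "r i j = 0") auto
qed

lemma sum_eq_single:
  assumes "finite A" "a \<in> A" "\<And>x. x \<in> A \<Longrightarrow> x \<noteq> a \<Longrightarrow> g x = 0"
  shows "sum g A = g a"
  using sum.mono_neutral_right[of A "{a}" g] assms by auto

lemma sum_sum_eq_single:
  assumes "finite A" "finite B" "a \<in> A" "b \<in> B"
    and "\<And>x y. x \<in> A \<Longrightarrow> y \<in> B \<Longrightarrow> (x, y) \<noteq> (a, b) \<Longrightarrow> g x y = 0"
  shows "(\<Sum>x\<in>A. \<Sum>y\<in>B. g x y) = g a b"
proof -
  have "(\<Sum>x\<in>A. \<Sum>y\<in>B. g x y) = (\<Sum>(x, y)\<in>A \<times> B. g x y)"
    by (rule sum.cartesian_product)
  also have "\<dots> = g a b"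
    by (rule trans[OF sum_eq_single[of _ "(a, b)"]]) (use assms in auto)
  finally show ?thesis .
qed

lemma finite_Idx: "finite (Idx N n)"
proof -
  have "Idx N n = {Mn, Pl} \<union> (\<lambda>(k, a). Bas k a) ` (SIGMA k:{1..N}. {..<n k})"
    unfolding Idx_def by auto
  then show ?thesis by simp
qed

lemma Idx_simps [simp]:
  "Mn \<in> Idx N n" "Pl \<in> Idx N n" "Bas k a \<in> Idx N n \<longleftrightarrow> 1 \<le> k \<and> k \<le> N \<and> a < n k"
  by (auto simp: Idx_def)

lemma finite_Freqs: "finite (Freqs N)"
  by (simp add: Freqs_def)

lemma Freqs_simps [simp]:
  "WP \<in> Freqs N" "WM \<in> Freqs N" "W k \<in> Freqs N \<longleftrightarrow> 1 \<le> k \<and> k < N"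
  by (auto simp: Freqs_def)

lemma cnj_sq [simp]: "cnj (sq x) = sq x"
  by (simp add: sq_def)

lemma sq_mult_sq: "0 \<le> x \<Longrightarrow> sq x * sq x = of_real x"
  by (simp add: sq_def flip: of_real_mult)

lemma phi_zero_Bas:
  "phi n k 0 (Bas k' b) = (if k' = k \<and> b < n k then inverse (sq (real (n k))) else 0)"
  by (simp add: phi_def sq_def divide_inverse)

lemma phi_Mn_Pl [simp]: "phi n k a Mn = 0" "phi n k a Pl = 0"
  by (simp_all add: phi_def)

lemma cnj_phi_zero [simp]: "cnj (phi n k 0 i) = phi n k 0 i"
  by (cases i) (simp_all add: phi_def)

lemma phi_zero_norm:
  assumes "1 \<le> k" "k \<le> N" "0 < n k"
  shows "(\<Sum>i\<in>Idx N n. phi n k 0 i * phi n k 0 i) = 1"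
proof -
  have sq_inv: "inverse (sq (real (n k))) * inverse (sq (real (n k))) = inverse (of_nat (n k))"
    by (simp add: sq_mult_sq flip: inverse_mult_distrib)
  have "(\<Sum>i\<in>Idx N n. phi n k 0 i * phi n k 0 i)
      = (\<Sum>i\<in>Bas k ` {..<n k}. inverse (of_nat (n k)))"
  proof (rule sum.mono_neutral_cong_right[OF finite_Idx])
    show "Bas k ` {..<n k} \<subseteq> Idx N n" using assms by auto
  qed (auto simp: phi_zero_Bas sq_inv Idx_def)
  also have "\<dots> = 1"
    using assms by (simp add: card_image inj_on_def)
  finally show ?thesis .
qed

lemma ket_simps [simp]:
  "ket Mn Mn = 1" "ket Pl Pl = 1" "ket Mn Pl = 0" "ket Pl Mn = 0"
  "ket Mn (Bas k a) = 0" "ket Pl (Bas k a) = 0"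
  by (simp_all add: ket_def)

lemma sum_mult_ket: "finite I \<Longrightarrow> j \<in> I \<Longrightarrow> (\<Sum>l\<in>I. f l * ket j l) = f j"
  by (subst sum_eq_single[of _ j]) (auto simp: ket_def)

lemma Kraus_apply:
  "Kraus N n Gam Neg WP i j = sq (real (n 1) * Gam Neg WP) * phi n 1 0 i * ket Pl j"
  "Kraus N n Gam Pos WP i j = sq (real (n 1) * Gam Pos WP) * ket Pl i * phi n 1 0 j"
  "Kraus N n Gam Neg (W k) i j = sq (Gam Neg (W k)) * Zop n k i j"
  "Kraus N n Gam Pos (W k) i j = sq (Gam Pos (W k)) * cnj (Zop n k j i)"
  "Kraus N n Gam Neg WM i j = sq (Gam Neg WM) * ket Mn i * phi n N 0 j"
  "Kraus N n Gam Pos WM i j = 0"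
  by (simp_all add: Kraus_def smult_op_def outer_def adj_def ket_def)

lemma Zop_Mn_Pl [simp]: "Zop n k Mn j = 0" "Zop n k Pl j = 0" "Zop n k i Mn = 0" "Zop n k i Pl = 0"
  by (cases i; simp add: Zop_def)+

lemma Kraus_col_Mn: "Kraus N n Gam e w i Mn = 0"
  by (cases e; cases w) (simp_all add: Kraus_apply)

lemma Kraus_col_Pl: "(e, w) \<noteq> (Neg, WP) \<Longrightarrow> Kraus N n Gam e w i Pl = 0"
  by (cases e; cases w) (simp_all add: Kraus_apply)

lemma Kraus_row_Mn: "(e, w) \<noteq> (Neg, WM) \<Longrightarrow> Kraus N n Gam e w Mn j = 0"
  by (cases e; cases w) (simp_all add: Kraus_apply)

lemma Zop_one_row_Bas_2_0: "0 < n 2 \<Longrightarrow> Zop n 1 (Bas 2 0) j = phi n 1 0 j"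
  by (cases j) (simp_all add: Zop_def phi_def numeral_2_eq_2)

lemma Heff_Mn:
  "Heff N n gam Mn l = (if l = Mn then - of_real (gam Pos WM) else 0)"
  "Heff N n gam l Mn = (if l = Mn then - of_real (gam Pos WM) else 0)"
  by (cases l; simp add: Heff_def outer_def absZ_def opmult_def adj_def Pk_def ket_def)+

lemma opmult_sandwich_diag:
  "opmult I (opmult I L r) (adj L) x x = sesq_form I r (\<lambda>m. cnj (L x m)) (\<lambda>m. cnj (L x m))"
  unfolding opmult_def adj_def sesq_form_def
  by (subst sum.swap) (simp add: sum_distrib_left sum_distrib_right mult_ac)

lemma Lgen_diag:
  "Lgen N n Gam gam r x x =
     - \<i> * (opmult (Idx N n) (Heff N n gam) r x x - opmult (Idx N n) r (Heff N n gam) x x)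
     + (\<Sum>w\<in>Freqs N. \<Sum>e\<in>{Pos, Neg}.
          let L = Kraus N n Gam e w; LL = opmult (Idx N n) (adj L) L in
            sesq_form (Idx N n) r (\<lambda>m. cnj (L x m)) (\<lambda>m. cnj (L x m))
            - 1/2 * (opmult (Idx N n) LL r x x + opmult (Idx N n) r LL x x))"
  by (simp add: Lgen_def Let_def opmult_sandwich_diag)

lemma Lgen_diag_unoccupied:
  assumes "\<And>l. r x l = 0" and "\<And>l. r l x = 0"
  shows "Lgen N n Gam gam r x x =
    (\<Sum>w\<in>Freqs N. \<Sum>e\<in>{Pos, Neg}.
       sesq_form (Idx N n) r (\<lambda>m. cnj (Kraus N n Gam e w x m)) (\<lambda>m. cnj (Kraus N n Gam e w x m)))"
  by (simp add: Lgen_diag Let_def opmult_def assms)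

lemma Lgen_diag_Mn:
  assumes "0 \<le> Gam Neg WM"
  shows "Lgen N n Gam gam r Mn Mn
    = of_real (Gam Neg WM) * sesq_form (Idx N n) r (phi n N 0) (phi n N 0)"
proof -
  let ?I = "Idx N n"
  have commutator: "opmult ?I (Heff N n gam) r Mn Mn = opmult ?I r (Heff N n gam) Mn Mn"
    unfolding opmult_def by (subst (1 2) sum_eq_single[of _ Mn]) (simp_all add: finite_Idx Heff_Mn)
  have no_loss: "opmult ?I (opmult ?I (adj (Kraus N n Gam e w)) (Kraus N n Gam e w)) r Mn Mn = 0"
      "opmult ?I r (opmult ?I (adj (Kraus N n Gam e w)) (Kraus N n Gam e w)) Mn Mn = 0" for e w
    by (simp_all add: opmult_def adj_def Kraus_col_Mn)
  have "(\<Sum>w\<in>Freqs N. \<Sum>e\<in>{Pos, Neg}.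
          sesq_form ?I r (\<lambda>m. cnj (Kraus N n Gam e w Mn m)) (\<lambda>m. cnj (Kraus N n Gam e w Mn m)))
      = sesq_form ?I r (\<lambda>m. cnj (Kraus N n Gam Neg WM Mn m)) (\<lambda>m. cnj (Kraus N n Gam Neg WM Mn m))"
    by (rule sum_sum_eq_single) (auto simp: finite_Freqs Kraus_row_Mn sesq_form_def)
  also have "\<dots> = of_real (Gam Neg WM) * sesq_form ?I r (phi n N 0) (phi n N 0)"
    using sesq_form_scale[of ?I r "sq (Gam Neg WM)" "phi n N 0"] assms
    by (simp add: Kraus_apply sq_mult_sq)
  finally show ?thesis
    by (simp add: Lgen_diag Let_def commutator no_loss)
qed

lemma Lgen_diag_Bas_2_0:
  assumes "2 \<le> N" "0 < n 2" "0 \<le> Gam Neg (W 1)"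
    and rows: "\<And>k b j. k \<noteq> 1 \<Longrightarrow> r (Bas k b) j = 0"
    and cols: "\<And>k b i. k \<noteq> 1 \<Longrightarrow> r i (Bas k b) = 0"
  shows "Lgen N n Gam gam r (Bas 2 0) (Bas 2 0)
    = of_real (Gam Neg (W 1)) * sesq_form (Idx N n) r (phi n 1 0) (phi n 1 0)"
proof -
  let ?I = "Idx N n" and ?S = "{i. \<forall>k b. i = Bas k b \<longrightarrow> k = 1}"
  let ?v = "\<lambda>e w m. cnj (Kraus N n Gam e w (Bas 2 0) m)"
  have supp: "r i j \<noteq> 0 \<Longrightarrow> i \<in> ?S \<and> j \<in> ?S" for i j
    using rows cols by blast
  have no_gain: "sesq_form ?I r (?v e w) (?v e w) = 0" if "(w, e) \<noteq> (W 1, Neg)" for e w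
  proof -
    have "?v e w i = 0" if "i \<in> ?S" for i
      using \<open>(w, e) \<noteq> (W 1, Neg)\<close> \<open>i \<in> ?S\<close>
      by (cases e; cases w; cases i) (auto simp: Kraus_apply Zop_def phi_zero_Bas)
    then have "sesq_form ?I r (?v e w) (?v e w) = sesq_form ?I r (\<lambda>_. 0) (\<lambda>_. 0)"
      by (intro sesq_form_cong_support[OF supp]) auto
    then show ?thesis by (simp add: sesq_form_def)
  qed
  have "Lgen N n Gam gam r (Bas 2 0) (Bas 2 0)
      = (\<Sum>w\<in>Freqs N. \<Sum>e\<in>{Pos, Neg}. sesq_form ?I r (?v e w) (?v e w))"
    by (rule Lgen_diag_unoccupied) (simp_all add: rows cols)
  also have "\<dots> = sesq_form ?I r (?v Neg (W 1)) (?v Neg (W 1))"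
    by (rule sum_sum_eq_single) (use no_gain \<open>2 \<le> N\<close> in \<open>auto simp: finite_Freqs\<close>)
  also have "\<dots> = of_real (Gam Neg (W 1)) * sesq_form ?I r (phi n 1 0) (phi n 1 0)"
    using sesq_form_scale[of ?I r "sq (Gam Neg (W 1))" "phi n 1 0"] assms(2,3)
    by (simp add: Kraus_apply Zop_one_row_Bas_2_0[simplified] sq_mult_sq)
  finally show ?thesis .
qed

lemma Lgen_diag_Bas_1_0:
  assumes "1 \<le> N" "0 < n 1" "0 \<le> Gam Neg WP"
    and supp: "\<And>i j. r i j \<noteq> 0 \<Longrightarrow> i \<in> {Mn, Pl} \<and> j \<in> {Mn, Pl}"
  shows "Lgen N n Gam gam r (Bas 1 0) (Bas 1 0) = of_real (Gam Neg WP) * r Pl Pl"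
proof -
  let ?I = "Idx N n"
  let ?v = "\<lambda>e w m. cnj (Kraus N n Gam e w (Bas 1 0) m)"
  define c where "c = sq (real (n 1) * Gam Neg WP) * inverse (sq (real (n 1)))"
  have no_gain: "sesq_form ?I r (?v e w) (?v e w) = 0" if "(w, e) \<noteq> (WP, Neg)" for e w
  proof -
    have "sesq_form ?I r (?v e w) (?v e w) = sesq_form ?I r (\<lambda>_. 0) (\<lambda>_. 0)"
      using that by (intro sesq_form_cong_support[OF supp]) (auto simp: Kraus_col_Mn Kraus_col_Pl)
    then show ?thesis by (simp add: sesq_form_def)
  qed
  have "Lgen N n Gam gam r (Bas 1 0) (Bas 1 0)
      = (\<Sum>w\<in>Freqs N. \<Sum>e\<in>{Pos, Neg}. sesq_form ?I r (?v e w) (?v e w))"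
    by (rule Lgen_diag_unoccupied) (use supp in blast)+
  also have "\<dots> = sesq_form ?I r (?v Neg WP) (?v Neg WP)"
    by (rule sum_sum_eq_single) (use no_gain in \<open>auto simp: finite_Freqs\<close>)
  also have "\<dots> = cnj c * c * sesq_form ?I r (ket Pl) (ket Pl)"
  proof -
    have "?v Neg WP = (\<lambda>i. c * ket Pl i)"
      using \<open>0 < n 1\<close> by (auto simp: c_def Kraus_apply phi_zero_Bas ket_def fun_eq_iff)
    then show ?thesis by (simp add: sesq_form_scale)
  qed
  also have "\<dots> = of_real (Gam Neg WP) * r Pl Pl"
  proof -
    have "cnj c * c = sq (real (n 1) * Gam Neg WP) * sq (real (n 1) * Gam Neg WP)
                      * inverse (sq (real (n 1)) * sq (real (n 1)))"
      by (simp add: c_def inverse_mult_distrib mult_ac)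
    also have "\<dots> = of_real (Gam Neg WP)"
      using assms(2,3) by (simp add: sq_mult_sq)
    finally show ?thesis
      by (simp add: sesq_form_point finite_Idx ket_def)
  qed
  finally show ?thesis .
qed

lemma is_state_zero_outside: "is_state N n \<rho> \<Longrightarrow> i \<notin> Idx N n \<or> j \<notin> Idx N n \<Longrightarrow> \<rho> i j = 0"
  unfolding is_state_def by blast

lemma is_state_psd_on: "is_state N n \<rho> \<Longrightarrow> psd_on (Idx N n) \<rho>"
  unfolding is_state_def psd_on_def sesq_form_def Let_def by blast

lemma is_state_hermitian:
  assumes "is_state N n \<rho>"
  shows "\<rho> j i = cnj (\<rho> i j)"
proof (cases "i \<in> Idx N n \<and> j \<in> Idx N n")
  case True
  then show ?thesis using psd_on_hermitian[OF finite_Idx is_state_psd_on[OF assms]] by blast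
qed (auto simp: is_state_zero_outside[OF assms])

lemma is_state_eq_projection_Mn:
  assumes state: "is_state N n \<rho>"
    and supp: "\<And>i j. \<rho> i j \<noteq> 0 \<Longrightarrow> i \<in> {Mn, Pl} \<and> j \<in> {Mn, Pl}"
    and "\<rho> Pl Pl = 0"
  shows "\<rho> = outer (ket Mn) (ket Mn)"
proof -
  have "sesq_form (Idx N n) \<rho> (ket Pl) (ket Pl) = 0"
    using \<open>\<rho> Pl Pl = 0\<close> by (simp add: ket_def sesq_form_point finite_Idx)
  then have "(\<Sum>l\<in>Idx N n. \<rho> Mn l * ket Pl l) = 0"
    by (rule psd_on_null_vector[OF finite_Idx is_state_psd_on[OF state]]) simp
  then have "\<rho> Mn Pl = 0"
    by (simp add: sum_mult_ket finite_Idx)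
  moreover have "\<rho> Mn Mn = 1"
  proof -
    have "1 = (\<Sum>i\<in>Idx N n. \<rho> i i)" using state unfolding is_state_def by simp
    also have "\<dots> = (\<Sum>i\<in>{Mn, Pl}. \<rho> i i)"
      by (rule sum.mono_neutral_right[OF finite_Idx]) (use supp in auto)
    finally show ?thesis using \<open>\<rho> Pl Pl = 0\<close> by simp
  qed
  ultimately show ?thesis
    using supp is_state_hermitian[OF state, of Mn Pl] \<open>\<rho> Pl Pl = 0\<close>
    by (fastforce simp: fun_eq_iff outer_def ket_def)
qed

locale OmegaPerp_state =
  fixes N :: nat and n :: "nat \<Rightarrow> nat" and \<rho> :: op
  assumes N_ge_2: "2 \<le> N"
    and n_pos: "\<And>k. 1 \<le> k \<Longrightarrow> k \<le> N \<Longrightarrow> 0 < n k"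
    and state: "is_state N n \<rho>"
    and supported: "supported_on N n \<rho> (OmegaPerp N n)"
begin

lemma column_Bas:
  obtains c d where "\<And>k b. \<rho> (Bas k b) j = c * phi n 1 0 (Bas k b) + d * phi n N 0 (Bas k b)"
proof (cases "j \<in> Idx N n")
  case True
  have "opapply (Idx N n) \<rho> (ket j) = (\<lambda>i. \<rho> i j)"
    using True by (simp add: fun_eq_iff opapply_def sum_mult_ket finite_Idx)
  then have "(\<lambda>i. \<rho> i j) \<in> OmegaPerp N n"
    using supported unfolding supported_on_def by metis
  then obtain a b c d where col: "\<And>i. i \<in> Idx N n \<Longrightarrow>
      \<rho> i j = a * ket Mn i + b * ket Pl i + c * phi n 1 0 i + d * phi n N 0 i"
    unfolding OmegaPerp_def by blast
  have "\<rho> (Bas k b') j = c * phi n 1 0 (Bas k b') + d * phi n N 0 (Bas k b')" for k b'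
  proof (cases "Bas k b' \<in> Idx N n")
    case False
    then show ?thesis using N_ge_2 by (auto simp: is_state_zero_outside[OF state] phi_zero_Bas)
  qed (simp add: col)
  then show ?thesis by (rule that)
next
  case False
  then show ?thesis using that[of 0 0] by (simp add: is_state_zero_outside[OF state])
qed

lemma middle_rows_vanish: "k \<noteq> 1 \<Longrightarrow> k \<noteq> N \<Longrightarrow> \<rho> (Bas k b) j = 0"
  by (rule column_Bas[of j]) (simp add: phi_zero_Bas)

lemma end_block_vanishes:
  assumes k: "k = 1 \<or> k = N" and null: "sesq_form (Idx N n) \<rho> (phi n k 0) (phi n k 0) = 0"
  shows "\<rho> (Bas k b) j = 0"
proof -
  obtain c d where col: "\<And>k b. \<rho> (Bas k b) j = c * phi n 1 0 (Bas k b) + d * phi n N 0 (Bas k b)"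
    using column_Bas[of j] by blast
  have k_range: "1 \<le> k" "k \<le> N" using k N_ge_2 by auto
  define ck where "ck = (if k = 1 then c else d)"
  have col_k: "\<rho> (Bas k b') j = ck * phi n k 0 (Bas k b')" for b'
    using k N_ge_2 by (auto simp: col ck_def phi_zero_Bas)
  have "ck = 0" if "j \<in> Idx N n"
  proof -
    have "0 = (\<Sum>l\<in>Idx N n. \<rho> j l * phi n k 0 l)"
      using psd_on_null_vector[OF finite_Idx is_state_psd_on[OF state] null that] by simp
    also have "\<dots> = (\<Sum>l\<in>Idx N n. cnj ck * (phi n k 0 l * phi n k 0 l))"
    proof (rule sum.cong[OF refl])
      fix l
      have "\<rho> j l = cnj (\<rho> l j)" by (rule is_state_hermitian[OF state])
      then show "\<rho> j l * phi n k 0 l = cnj ck * (phi n k 0 l * phi n k 0 l)"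
        by (cases l) (simp_all add: col_k phi_zero_Bas)
    qed
    also have "\<dots> = cnj ck"
      using phi_zero_norm[where n = n, OF k_range n_pos[OF k_range]] by (simp flip: sum_distrib_left)
    finally show ?thesis by simp
  qed
  then show ?thesis
    using col_k is_state_zero_outside[OF state] by (cases "j \<in> Idx N n") auto
qed

lemma rows_vanish_off_block_1:
  assumes "sesq_form (Idx N n) \<rho> (phi n N 0) (phi n N 0) = 0" and "k \<noteq> 1"
  shows "\<rho> (Bas k b) j = 0" and "\<rho> j (Bas k b) = 0"
proof -
  show "\<rho> (Bas k b) j = 0"
    using assms middle_rows_vanish end_block_vanishes[of N] by blast
  then show "\<rho> j (Bas k b) = 0"
    using is_state_hermitian[OF state, of "Bas k b" j] by simp
qed

lemma supported_on_Mn_Pl: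
  assumes "sesq_form (Idx N n) \<rho> (phi n N 0) (phi n N 0) = 0"
    and "sesq_form (Idx N n) \<rho> (phi n 1 0) (phi n 1 0) = 0"
    and "\<rho> i j \<noteq> 0"
  shows "i \<in> {Mn, Pl} \<and> j \<in> {Mn, Pl}"
proof -
  have "\<rho> (Bas k b) l = 0" "\<rho> l (Bas k b) = 0" for k b l
    using rows_vanish_off_block_1[OF assms(1)] end_block_vanishes[OF _ assms(2)]
      is_state_hermitian[OF state, of "Bas k b" l]
    by (cases "k = 1"; simp)+
  then show ?thesis using assms(3) by (cases i; cases j) auto
qed

end

theorem theorem3p25:
  fixes N :: nat and n :: "nat \<Rightarrow> nat"
    and Gam gam :: "sgn \<Rightarrow> bohr \<Rightarrow> real" and \<rho> :: op
  assumes "N \<ge> 2"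
    and "\<forall>k. 1 \<le> k \<and> k < N \<longrightarrow> n (Suc k) \<le> n k"
    and "\<forall>k. 1 \<le> k \<and> k \<le> N \<longrightarrow> 1 \<le> n k"
    and "\<forall>e. \<forall>w\<in>Freqs N. Gam e w > 0"
    and "is_state N n \<rho>"
    and "invariant N n Gam gam \<rho>"
    and "supported_on N n \<rho> (OmegaPerp N n)"
  shows "\<rho> = outer (ket Mn) (ket Mn)"
proof -
  interpret OmegaPerp_state N n \<rho>
    using assms by unfold_locales auto
  have n_1: "0 < n 1" and n_2: "0 < n 2" using n_pos N_ge_2 by auto
  have Gam: "0 < Gam Neg WM" "0 < Gam Neg (W 1)" "0 < Gam Neg WP"
    using assms(4) N_ge_2 by auto
  have stationary: "Lgen N n Gam gam \<rho> i i = 0" if "i \<in> Idx N n" for i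
    using assms(6) that unfolding invariant_def by blast
  have null_N: "sesq_form (Idx N n) \<rho> (phi n N 0) (phi n N 0) = 0"
    using stationary[of Mn] Lgen_diag_Mn[of Gam] Gam(1) by simp
  have "Lgen N n Gam gam \<rho> (Bas 2 0) (Bas 2 0)
      = of_real (Gam Neg (W 1)) * sesq_form (Idx N n) \<rho> (phi n 1 0) (phi n 1 0)"
    by (rule Lgen_diag_Bas_2_0) (use N_ge_2 n_2 Gam(2) rows_vanish_off_block_1[OF null_N] in auto)
  then have null_1: "sesq_form (Idx N n) \<rho> (phi n 1 0) (phi n 1 0) = 0"
    using stationary[of "Bas 2 0"] Gam(2) N_ge_2 n_2 by simp
  note supp = supported_on_Mn_Pl[OF null_N null_1]
  have "Lgen N n Gam gam \<rho> (Bas 1 0) (Bas 1 0) = of_real (Gam Neg WP) * \<rho> Pl Pl"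
    by (rule Lgen_diag_Bas_1_0) (use N_ge_2 n_1 Gam(3) supp in auto)
  then have "\<rho> Pl Pl = 0"
    using stationary[of "Bas 1 0"] Gam(3) N_ge_2 n_1 by simp
  then show ?thesis
    using is_state_eq_projection_Mn[OF state] supp by blast
qed

end
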